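(* Let $r\geq 3$ and let $D$ be an $m$-colored semicomplete $r$-partite digraph such that every $\overrightarrow{C}_3$ and every $\overrightarrow{C}_4$ contained in $D$ is monochromatic. Then $D$ has a $2$-colored kernel.
   Context: A semicomplete $r$-partite digraph ($r\ge 2$) is a digraph whose vertex set is partitioned into $r$ nonempty independent sets (partite sets) such that for any two vertices $u,v$ in different partite sets at least one of the arcs $(u,v)$, $(v,u)$ is present (both may be present); there are no arcs inside a partite set. An $m$-colored digraph is a digraph whose arcs are each assigned one of $m$ colors. A directed path (no repeated vertices) is $j$-colored if its arcs use exactly $j$ distinct colors. "Contained in $D$" means being a subdigraph of $D$; a subdigraph is monochromatic if all its arcs have the same color. $\overrightarrow{C}_n$ is the directed cycle of length $n$. A $k$-colored kernel of $D$ is a nonempty set $K\subseteq V(D)$ such that (a) for every $u\in V(D)\setminus K$ there exist $v\in K$ and a $j$-colored directed path from $u$ to $v$ with $1\le j\le k$, and (b) for all distinct $u,v\in K$ there is no $j$-colored directed path from $u$ to $v$ with $1\le j\le k$. *)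

theory Defs
  imports Main
begin

definition digraph :: "'a set \<Rightarrow> ('a \<times> 'a) set \<Rightarrow> bool" where
  "digraph V A \<longleftrightarrow> finite V \<and> A \<subseteq> V \<times> V \<and> (\<forall>v. (v, v) \<notin> A)"

definition m_colored :: "('a \<times> 'a) set \<Rightarrow> nat \<Rightarrow> ('a \<times> 'a \<Rightarrow> nat) \<Rightarrow> bool" where
  "m_colored A m c \<longleftrightarrow> (\<forall>e\<in>A. c e < m)"

definition semicomplete_multipartite ::
  "'a set \<Rightarrow> ('a \<times> 'a) set \<Rightarrow> nat \<Rightarrow> 'a set set \<Rightarrow> bool" where
  "semicomplete_multipartite V A r P \<longleftrightarrow>
     finite P \<and> card P = r \<and> \<Union>P = V \<and> (\<forall>X\<in>P. X \<noteq> {}) \<and>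
     (\<forall>X\<in>P. \<forall>Y\<in>P. X \<noteq> Y \<longrightarrow> X \<inter> Y = {}) \<and>
     (\<forall>X\<in>P. \<forall>u\<in>X. \<forall>v\<in>X. (u, v) \<notin> A) \<and>
     (\<forall>X\<in>P. \<forall>Y\<in>P. X \<noteq> Y \<longrightarrow> (\<forall>u\<in>X. \<forall>v\<in>Y. (u, v) \<in> A \<or> (v, u) \<in> A))"

definition path_arcs :: "'a list \<Rightarrow> ('a \<times> 'a) set" where
  "path_arcs p = set (zip p (tl p))"

definition dipath :: "('a \<times> 'a) set \<Rightarrow> 'a list \<Rightarrow> 'a \<Rightarrow> 'a \<Rightarrow> bool" where
  "dipath A p u v \<longleftrightarrow> length p \<ge> 2 \<and> distinct p \<and> hd p = u \<and> last p = v \<and>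
     path_arcs p \<subseteq> A"

definition num_colors :: "('a \<times> 'a \<Rightarrow> nat) \<Rightarrow> 'a list \<Rightarrow> nat" where
  "num_colors c p = card (c ` path_arcs p)"

definition colored_reach ::
  "('a \<times> 'a) set \<Rightarrow> ('a \<times> 'a \<Rightarrow> nat) \<Rightarrow> nat \<Rightarrow> 'a \<Rightarrow> 'a \<Rightarrow> bool" where
  "colored_reach A c k u v \<longleftrightarrow>
     (\<exists>p. dipath A p u v \<and> 1 \<le> num_colors c p \<and> num_colors c p \<le> k)"

definition k_colored_kernel ::
  "'a set \<Rightarrow> ('a \<times> 'a) set \<Rightarrow> ('a \<times> 'a \<Rightarrow> nat) \<Rightarrow> nat \<Rightarrow> 'a set \<Rightarrow> bool" where
  "k_colored_kernel V A c k K \<longleftrightarrow>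
     K \<noteq> {} \<and> K \<subseteq> V \<and>
     (\<forall>u\<in>V - K. \<exists>v\<in>K. colored_reach A c k u v) \<and>
     (\<forall>u\<in>K. \<forall>v\<in>K. u \<noteq> v \<longrightarrow> \<not> colored_reach A c k u v)"

definition C3_monochromatic :: "('a \<times> 'a) set \<Rightarrow> ('a \<times> 'a \<Rightarrow> nat) \<Rightarrow> bool" where
  "C3_monochromatic A c \<longleftrightarrow>
     (\<forall>x0 x1 x2. distinct [x0, x1, x2] \<and>
        (x0, x1) \<in> A \<and> (x1, x2) \<in> A \<and> (x2, x0) \<in> A \<longrightarrow>
        c (x0, x1) = c (x1, x2) \<and> c (x1, x2) = c (x2, x0))"

definition C4_monochromatic :: "('a \<times> 'a) set \<Rightarrow> ('a \<times> 'a \<Rightarrow> nat) \<Rightarrow> bool" where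
  "C4_monochromatic A c \<longleftrightarrow>
     (\<forall>x0 x1 x2 x3. distinct [x0, x1, x2, x3] \<and>
        (x0, x1) \<in> A \<and> (x1, x2) \<in> A \<and> (x2, x3) \<in> A \<and> (x3, x0) \<in> A \<longrightarrow>
        c (x0, x1) = c (x1, x2) \<and> c (x1, x2) = c (x2, x3) \<and> c (x2, x3) = c (x3, x0))"

end

theory Submission
  imports Defs
begin

(* Let R be the transitive closure of the arc relation.  Every finite
   transitive relation has a "kernel": a nonempty set K that is R-independent and
   R-absorbing.  It therefore suffices to show that, for u \<noteq> v, there is a directed
   path from u to v using at most two colours exactly when (u, v) \<in> R.  The nontrivial
   direction takes a SHORTEST walk from u to v: it is a path without forward chords.
   In a semicomplete multipartite digraph such a path of length at least 3 has, for each
   pair of consecutive arcs a \<rightarrow> b \<rightarrow> d, a back arc closing a directed 3-cycle (if a, d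
   lie in different parts) or a directed 4-cycle with the neighbouring vertex (if they
   lie in the same part); as these cycles are monochromatic, the whole path is.  Paths
   of length at most 2 trivially use at most two colours. *)

definition path_kernel :: "'a set \<Rightarrow> ('a \<times> 'a) set \<Rightarrow> 'a set \<Rightarrow> bool" where
  "path_kernel S R K \<longleftrightarrow> K \<noteq> {} \<and> K \<subseteq> S \<and>
     (\<forall>u\<in>S - K. \<exists>v\<in>K. (u, v) \<in> R) \<and> (\<forall>u\<in>K. \<forall>v\<in>K. u \<noteq> v \<longrightarrow> (u, v) \<notin> R)"

lemma trans_sink_exists:
  assumes "finite S" "S \<noteq> {}" "trans R"
  shows "\<exists>v\<in>S. \<forall>w\<in>S. (v, w) \<in> R \<longrightarrow> (w, v) \<in> R"
  using assms(1,2)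
proof (induction S rule: finite_ne_induct)
  case (singleton x)
  then show ?case by auto
next
  case (insert x F)
  then obtain v where v: "v \<in> F" "\<forall>w\<in>F. (v, w) \<in> R \<longrightarrow> (w, v) \<in> R" by auto
  show ?case
  proof (cases "(v, x) \<in> R \<and> (x, v) \<notin> R")
    case True
    then have "\<forall>w\<in>insert x F. (x, w) \<in> R \<longrightarrow> (w, x) \<in> R"
      using v transD[OF assms(3)] by blast
    then show ?thesis by blast
  next
    case False
    then show ?thesis using v by blast
  qed
qed

(* Every finite transitive relation has a kernel: take a sink v, and add to v a kernel
   of the vertices that do not reach v (by induction on the size of S). *)
lemma trans_path_kernel_exists:
  assumes "finite S" "S \<noteq> {}" "trans R"
  shows "\<exists>K. path_kernel S R K"
  using assms(1,2)
proof (induction "card S" arbitrary: S rule: less_induct)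
  case less
  obtain v where v: "v \<in> S" "\<forall>w\<in>S. (v, w) \<in> R \<longrightarrow> (w, v) \<in> R"
    using trans_sink_exists[OF less.prems assms(3)] by blast
  define S' where "S' = {w\<in>S. w \<noteq> v \<and> (w, v) \<notin> R}"
  show ?case
  proof (cases "S' = {}")
    case True
    then have "path_kernel S R {v}" using v(1) by (auto simp: path_kernel_def S'_def)
    then show ?thesis ..
  next
    case False
    have "S' \<subset> S" using v(1) by (auto simp: S'_def)
    then have "card S' < card S" "finite S'"
      using less.prems(1) psubset_card_mono finite_subset by blast+
    then obtain K' where K': "path_kernel S' R K'" using less.hyps False by blast
    have "path_kernel S R (insert v K')"
      using K' v unfolding path_kernel_def S'_def by blast
    then show ?thesis ..
  qed
qed

definition walk :: "('a \<times> 'a) set \<Rightarrow> nat \<Rightarrow> (nat \<Rightarrow> 'a) \<Rightarrow> 'a \<Rightarrow> 'a \<Rightarrow> bool" where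
  "walk A n f u v \<longleftrightarrow> f 0 = u \<and> f n = v \<and> (\<forall>i<n. (f i, f (Suc i)) \<in> A)"

definition shortest_walk ::
  "('a \<times> 'a) set \<Rightarrow> nat \<Rightarrow> (nat \<Rightarrow> 'a) \<Rightarrow> 'a \<Rightarrow> 'a \<Rightarrow> bool" where
  "shortest_walk A n f u v \<longleftrightarrow> 1 \<le> n \<and> walk A n f u v \<and>
     (\<forall>m g. 1 \<le> m \<and> m < n \<longrightarrow> \<not> walk A m g u v)"

lemma walk_of_trancl: "(u, v) \<in> A\<^sup>+ \<Longrightarrow> \<exists>n f. 1 \<le> n \<and> walk A n f u v"
proof (induction rule: trancl_induct)
  case (base y)
  have "walk A 1 (\<lambda>k. if k = 0 then u else y) u y" using base by (simp add: walk_def)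
  then show ?case by blast
next
  case (step y z)
  then obtain n f where "1 \<le> n" "walk A n f u y" by blast
  then have "walk A (Suc n) (f(Suc n := z)) u z"
    using step(2) by (auto simp: walk_def less_Suc_eq)
  then show ?case by (intro exI[of _ "Suc n"]) auto
qed

lemma shortest_walk_exists:
  assumes "(u, v) \<in> A\<^sup>+" shows "\<exists>n f. shortest_walk A n f u v"
proof -
  define L where "L n \<longleftrightarrow> 1 \<le> n \<and> (\<exists>f. walk A n f u v)" for n
  obtain n where "L n" "\<And>m. m < n \<Longrightarrow> \<not> L m"
    using walk_of_trancl[OF assms] exists_least_iff[of L] unfolding L_def by blast
  then show ?thesis unfolding L_def shortest_walk_def by blast
qed

(* Replacing the segment f i ... f j of a walk by a single arc f i \<rightarrow> f j. *)
lemma walk_shortcut_arc: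
  assumes "walk A n f u v" "i < j" "j \<le> n" "(f i, f j) \<in> A"
  shows "walk A (n + i + 1 - j) (\<lambda>k. if k \<le> i then f k else f (k + j - i - 1)) u v"
  unfolding walk_def
proof (intro conjI allI impI)
  have arcs: "\<And>k. k < n \<Longrightarrow> (f k, f (Suc k)) \<in> A" using assms(1) by (simp add: walk_def)
  show "(if 0 \<le> i then f 0 else f (0 + j - i - 1)) = u" using assms(1) by (simp add: walk_def)
  have "\<not> n + i + 1 - j \<le> i" "n + i + 1 - j + j - i - 1 = n" using assms(2,3) by linarith+
  then show "(if n + i + 1 - j \<le> i then f (n + i + 1 - j) else f (n + i + 1 - j + j - i - 1)) = v"
    using assms(1) by (simp add: walk_def)
  fix k assume k: "k < n + i + 1 - j"
  consider "k < i" | "k = i" | "k > i" by linarith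
  then show "(if k \<le> i then f k else f (k + j - i - 1),
      if Suc k \<le> i then f (Suc k) else f (Suc k + j - i - 1)) \<in> A"
  proof cases
    case 1
    then have "k < n" using assms(2,3) by linarith
    then show ?thesis using 1 arcs by simp
  next
    case 2
    then show ?thesis using assms(2,4) by simp
  next
    case 3
    have "k + j - i - 1 < n" "Suc k + j - i - 1 = Suc (k + j - i - 1)" using k 3 assms(2,3) by linarith+
    then show ?thesis using 3 arcs by simp
  qed
qed

(* Removing the closed segment f i ... f j (with f i = f j) of a walk. *)
lemma walk_shortcut_loop:
  assumes "walk A n f u v" "i < j" "j \<le> n" "f i = f j"
  shows "walk A (n + i - j) (\<lambda>k. if k \<le> i then f k else f (k + j - i)) u v"
  unfolding walk_def
proof (intro conjI allI impI)
  show "(if 0 \<le> i then f 0 else f (0 + j - i)) = u" using assms(1) by (simp add: walk_def)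
  show "(if n + i - j \<le> i then f (n + i - j) else f (n + i - j + j - i)) = v"
  proof (cases "n + i - j \<le> i")
    case True
    then have "j = n" using assms by linarith
    then show ?thesis using assms True by (simp add: walk_def)
  next
    case False
    then show ?thesis using assms(1) by (simp add: walk_def)
  qed
  fix k assume k: "k < n + i - j"
  consider "k < i" | "k = i" | "k > i" by linarith
  then show "(if k \<le> i then f k else f (k + j - i),
      if Suc k \<le> i then f (Suc k) else f (Suc k + j - i)) \<in> A"
  proof cases
    case 1
    then show ?thesis using assms(1,2,3) k by (auto simp: walk_def)
  next
    case 2
    have "j < n" "Suc k + j - i = Suc j" using k 2 assms by linarith+
    then show ?thesis using 2 assms(1,4) by (auto simp: walk_def)
  next
    case 3
    have "k + j - i < n" "Suc k + j - i = Suc (k + j - i)" using k 3 assms by linarith+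
    then show ?thesis using 3 assms(1) by (auto simp: walk_def)
  qed
qed

lemma shortest_walk_distinct:
  assumes "shortest_walk A n f u v" "u \<noteq> v" "i < j" "j \<le> n"
  shows "f i \<noteq> f j"
proof
  assume eq: "f i = f j"
  have w: "walk A n f u v" using assms(1) by (simp add: shortest_walk_def)
  have "\<not> (i = 0 \<and> j = n)" using eq assms(2) w by (auto simp: walk_def)
  then have "1 \<le> n + i - j" "n + i - j < n" using assms(3,4) by linarith+
  moreover have "walk A (n + i - j) (\<lambda>k. if k \<le> i then f k else f (k + j - i)) u v"
    using walk_shortcut_loop[OF w assms(3,4) eq] .
  ultimately show False using assms(1) unfolding shortest_walk_def by blast
qed

lemma shortest_walk_no_chord:
  assumes "shortest_walk A n f u v" "i + 2 \<le> j" "j \<le> n"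
  shows "(f i, f j) \<notin> A"
proof
  assume chord: "(f i, f j) \<in> A"
  have w: "walk A n f u v" using assms(1) by (simp add: shortest_walk_def)
  have "walk A (n + i + 1 - j) (\<lambda>k. if k \<le> i then f k else f (k + j - i - 1)) u v"
    using walk_shortcut_arc[OF w _ assms(3) chord] assms(2) by simp
  moreover have "1 \<le> n + i + 1 - j" "n + i + 1 - j < n" using assms(2,3) by linarith+
  ultimately show False using assms(1) unfolding shortest_walk_def by blast
qed

definition same_part :: "'a set set \<Rightarrow> 'a \<Rightarrow> 'a \<Rightarrow> bool" where
  "same_part P x y \<longleftrightarrow> (\<exists>X\<in>P. x \<in> X \<and> y \<in> X)"

lemma same_part_trans:
  assumes "semicomplete_multipartite V A r P" "same_part P x y" "same_part P y z"
  shows "same_part P x z"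
proof -
  obtain X Y where "X \<in> P" "Y \<in> P" "x \<in> X" "y \<in> X \<inter> Y" "z \<in> Y"
    using assms(2,3) unfolding same_part_def by blast
  moreover have "\<forall>X\<in>P. \<forall>Y\<in>P. X \<noteq> Y \<longrightarrow> X \<inter> Y = {}"
    using assms(1) unfolding semicomplete_multipartite_def by simp
  ultimately show ?thesis unfolding same_part_def by blast
qed

lemma same_part_sym: "same_part P x y \<Longrightarrow> same_part P y x"
  unfolding same_part_def by blast

lemma arc_not_same_part:
  assumes "semicomplete_multipartite V A r P" "(x, y) \<in> A"
  shows "\<not> same_part P x y"
proof -
  have "\<forall>X\<in>P. \<forall>u\<in>X. \<forall>v\<in>X. (u, v) \<notin> A"
    using assms(1) unfolding semicomplete_multipartite_def by simp
  then show ?thesis using assms(2) unfolding same_part_def by blast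
qed

lemma not_same_part_adjacent:
  assumes "semicomplete_multipartite V A r P" "x \<in> V" "y \<in> V" "\<not> same_part P x y"
  shows "(x, y) \<in> A \<or> (y, x) \<in> A"
proof -
  have "\<Union>P = V"
    and semi: "\<forall>X\<in>P. \<forall>Y\<in>P. X \<noteq> Y \<longrightarrow> (\<forall>u\<in>X. \<forall>v\<in>Y. (u, v) \<in> A \<or> (v, u) \<in> A)"
    using assms(1) unfolding semicomplete_multipartite_def by simp_all
  then obtain X Y where XY: "X \<in> P" "Y \<in> P" "x \<in> X" "y \<in> Y"
    using assms(2,3) by blast
  then have "X \<noteq> Y" using assms(4) unfolding same_part_def by blast
  then show ?thesis using semi XY by blast
qed

lemma walk_vertex_in:
  assumes "walk A n f u v" "1 \<le> n" "A \<subseteq> V \<times> V" "k \<le> n"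
  shows "f k \<in> V"
proof (cases "k < n")
  case True
  then show ?thesis using assms(1,3) by (auto simp: walk_def)
next
  case False
  then have "k = Suc (n - 1)" using assms(2,4) by linarith
  moreover have "(f (n - 1), f (Suc (n - 1))) \<in> A" using assms(1,2) unfolding walk_def
    by (metis diff_less less_numeral_extra(1) order_less_le_trans)
  ultimately have "(f (n - 1), f k) \<in> A" by simp
  then show ?thesis using assms(3) by blast
qed

(* On a shortest walk, two non-consecutive vertices in different parts are joined by
   a backward arc, since a forward arc would be a chord. *)
lemma shortest_walk_back_arc:
  assumes "semicomplete_multipartite V A r P" "A \<subseteq> V \<times> V" "shortest_walk A n f u v"
    "i + 2 \<le> j" "j \<le> n" "\<not> same_part P (f i) (f j)"
  shows "(f j, f i) \<in> A"
proof -
  have "f i \<in> V" "f j \<in> V"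
    using assms(2-5) walk_vertex_in[of A n f u v V] by (auto simp: shortest_walk_def)
  then show ?thesis
    using not_same_part_adjacent[OF assms(1)] shortest_walk_no_chord[OF assms(3-5)] assms(6) by blast
qed

lemma C3_colors:
  assumes "C3_monochromatic A c" "distinct [x0, x1, x2]"
    "(x0, x1) \<in> A" "(x1, x2) \<in> A" "(x2, x0) \<in> A"
  shows "c (x0, x1) = c (x1, x2)"
  using assms unfolding C3_monochromatic_def by blast

lemma C4_colors:
  assumes "C4_monochromatic A c" "distinct [x0, x1, x2, x3]"
    "(x0, x1) \<in> A" "(x1, x2) \<in> A" "(x2, x3) \<in> A" "(x3, x0) \<in> A"
  shows "c (x0, x1) = c (x1, x2)" "c (x1, x2) = c (x2, x3)"
  using assms unfolding C4_monochromatic_def by blast+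

(* A back arc closes a 3-cycle a b d if a and d lie in
   different parts; otherwise the next vertex e (resp. the previous vertex z) lies
   outside the part of a and d and closes a 4-cycle a b d e (resp. z a b d). *)
lemma shortest_walk_consecutive_colors:
  assumes sm: "semicomplete_multipartite V A r P" and AV: "A \<subseteq> V \<times> V"
    and C3: "C3_monochromatic A c" and C4: "C4_monochromatic A c"
    and sw: "shortest_walk A n f u v" and uv: "u \<noteq> v"
    and n3: "3 \<le> n" and i: "Suc (Suc i) \<le> n"
  shows "c (f i, f (Suc i)) = c (f (Suc i), f (Suc (Suc i)))"
proof -
  have arc: "(f k, f (Suc k)) \<in> A" if "k < n" for k
    using sw that by (simp add: shortest_walk_def walk_def)
  have dist: "f k \<noteq> f l" if "k < l" "l \<le> n" for k l
    using shortest_walk_distinct[OF sw uv that] .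
  have back_arc: "(f l, f k) \<in> A" if "k + 2 \<le> l" "l \<le> n" "\<not> same_part P (f k) (f l)" for k l
    using shortest_walk_back_arc[OF sm AV sw that] .
  define a where "a = f i"
  define b where "b = f (Suc i)"
  define d where "d = f (Suc (Suc i))"
  note a_b_d_def = a_def b_def d_def
  have ab: "(a, b) \<in> A" and bd: "(b, d) \<in> A" using arc i by (simp_all add: a_b_d_def)
  have abd: "distinct [a, b, d]" using dist[of i "Suc i"] dist[of i "Suc (Suc i)"]
      dist[of "Suc i" "Suc (Suc i)"] i by (auto simp: a_b_d_def)
  consider (different) "\<not> same_part P a d"
    | (forward) "same_part P a d" "Suc (Suc (Suc i)) \<le> n"
    | (backward) "same_part P a d" "1 \<le> i"
    using i n3 by linarith
  then have "c (a, b) = c (b, d)"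
  proof cases
    case different
    then have "(d, a) \<in> A" using back_arc[of i "Suc (Suc i)"] i by (simp add: a_b_d_def)
    then show ?thesis using C3_colors[OF C3 abd ab bd] by blast
  next
    case forward
    define e where "e = f (Suc (Suc (Suc i)))"
    have de: "(d, e) \<in> A" using arc[of "Suc (Suc i)"] forward(2) by (simp add: a_b_d_def e_def)
    then have "\<not> same_part P a e"
      using same_part_trans[OF sm same_part_sym[OF forward(1)]] arc_not_same_part[OF sm de] by blast
    then have "(e, a) \<in> A" using back_arc[of i "Suc (Suc (Suc i))"] forward(2) by (simp add: a_b_d_def e_def)
    moreover have "distinct [a, b, d, e]" using abd dist[of i "Suc (Suc (Suc i))"]
      dist[of "Suc i" "Suc (Suc (Suc i))"] dist[of "Suc (Suc i)" "Suc (Suc (Suc i))"] forward(2)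
      by (auto simp: a_b_d_def e_def)
    ultimately show ?thesis using C4_colors(1)[OF C4 _ ab bd de] by blast
  next
    case backward
    define z where "z = f (i - 1)"
    have za: "(z, a) \<in> A" using arc[of "i - 1"] backward(2) i by (simp add: a_b_d_def z_def)
    then have "\<not> same_part P z d"
      using same_part_trans[OF sm _ same_part_sym[OF backward(1)]] arc_not_same_part[OF sm za] by blast
    then have "(d, z) \<in> A" using back_arc[of "i - 1" "Suc (Suc i)"] backward(2) i
      by (simp add: a_b_d_def z_def)
    moreover have "distinct [z, a, b, d]" using abd dist[of "i - 1" i] dist[of "i - 1" "Suc i"]
      dist[of "i - 1" "Suc (Suc i)"] backward(2) i by (auto simp: a_b_d_def z_def)
    ultimately show ?thesis using C4_colors(2)[OF C4 _ za ab bd] by blast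
  qed
  then show ?thesis by (simp add: a_b_d_def)
qed

lemma shortest_walk_monochromatic:
  assumes "semicomplete_multipartite V A r P" "A \<subseteq> V \<times> V"
    "C3_monochromatic A c" "C4_monochromatic A c"
    "shortest_walk A n f u v" "u \<noteq> v" "3 \<le> n"
  shows "i < n \<Longrightarrow> c (f i, f (Suc i)) = c (f 0, f 1)"
proof (induction i)
  case 0
  then show ?case by simp
next
  case (Suc i)
  then show ?case using shortest_walk_consecutive_colors[OF assms, of i] by simp
qed

lemma path_arcs_map_upt:
  "path_arcs (map f [0..<Suc n]) = (\<lambda>i. (f i, f (Suc i))) ` {..<n}"
proof -
  have "zip (map f [0..<Suc n]) (tl (map f [0..<Suc n])) = map (\<lambda>i. (f i, f (Suc i))) [0..<n]"
    by (simp add: list_eq_iff_nth_eq nth_tl del: upt_Suc)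
  then show ?thesis by (simp add: path_arcs_def atLeast_upt)
qed

lemma shortest_walk_dipath:
  assumes "shortest_walk A n f u v" "u \<noteq> v"
  shows "dipath A (map f [0..<Suc n]) u v"
proof -
  have w: "walk A n f u v" and n: "1 \<le> n" using assms(1) by (simp_all add: shortest_walk_def)
  have "inj_on f {0..<Suc n}"
    using shortest_walk_distinct[OF assms] by (intro inj_onI) (metis atLeastLessThan_iff less_Suc_eq_le
        linorder_neqE_nat)
  then have "distinct (map f [0..<Suc n])" by (simp add: distinct_map del: upt_Suc)
  moreover have "path_arcs (map f [0..<Suc n]) \<subseteq> A"
    using w unfolding path_arcs_map_upt walk_def by auto
  ultimately show ?thesis
    using w n unfolding dipath_def walk_def by (simp add: hd_map last_map del: upt_Suc)
qed

(* Reachability implies reachability by a path of at most two colours: a shortest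
   walk is monochromatic if it has at least 3 arcs and has at most 2 arcs otherwise. *)
lemma colored_reach_of_trancl:
  assumes sm: "semicomplete_multipartite V A r P" and AV: "A \<subseteq> V \<times> V"
    and C3: "C3_monochromatic A c" and C4: "C4_monochromatic A c"
    and uv: "(u, v) \<in> A\<^sup>+" "u \<noteq> v"
  shows "colored_reach A c 2 u v"
proof -
  obtain n f where sw: "shortest_walk A n f u v" using shortest_walk_exists[OF uv(1)] by blast
  then have n: "1 \<le> n" by (simp add: shortest_walk_def)
  define p where "p = map f [0..<Suc n]"
  have colors: "c ` path_arcs p = (\<lambda>i. c (f i, f (Suc i))) ` {..<n}"
    unfolding p_def path_arcs_map_upt image_image ..
  have "1 \<le> num_colors c p"
    using n unfolding num_colors_def colors by (auto simp: Suc_le_eq card_gt_0_iff)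
  moreover have "num_colors c p \<le> 2"
  proof (cases "3 \<le> n")
    case True
    then have "c ` path_arcs p \<subseteq> {c (f 0, f 1)}"
      using shortest_walk_monochromatic[OF sm AV C3 C4 sw uv(2) True] unfolding colors by blast
    then have "card (c ` path_arcs p) \<le> card {c (f 0, f 1)}" by (rule card_mono[rotated]) simp
    then show ?thesis unfolding num_colors_def by simp
  next
    case False
    have "num_colors c p \<le> card {..<n}" unfolding num_colors_def colors by (rule card_image_le) simp
    then show ?thesis using False by simp
  qed
  ultimately show ?thesis
    using shortest_walk_dipath[OF sw uv(2)] unfolding colored_reach_def p_def by blast
qed

lemma path_arcs_Cons_Cons: "path_arcs (x # y # zs) = insert (x, y) (path_arcs (y # zs))"
  by (simp add: path_arcs_def)

lemma trancl_of_path_arcs: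
  "2 \<le> length p \<Longrightarrow> path_arcs p \<subseteq> A \<Longrightarrow> (hd p, last p) \<in> A\<^sup>+"
proof (induction p rule: induct_list012)
  case 1
  then show ?case by simp
next
  case (2 x)
  then show ?case by simp
next
  case (3 x y zs)
  then have xy: "(x, y) \<in> A" and arcs: "path_arcs (y # zs) \<subseteq> A"
    by (simp_all add: path_arcs_Cons_Cons)
  show ?case
  proof (cases zs)
    case Nil
    then show ?thesis using xy by simp
  next
    case (Cons z zs')
    then have "(y, last (y # zs)) \<in> A\<^sup>+" using "3.IH"(2) arcs by simp
    then show ?thesis using xy by (simp add: trancl_into_trancl2)
  qed
qed

lemma trancl_of_colored_reach: "colored_reach A c k u v \<Longrightarrow> (u, v) \<in> A\<^sup>+"
  unfolding colored_reach_def dipath_def using trancl_of_path_arcs by blast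

lemma k_colored_kernel_of_path_kernel:
  assumes "path_kernel V (A\<^sup>+) K"
    and "\<And>u v. u \<noteq> v \<Longrightarrow> colored_reach A c k u v \<longleftrightarrow> (u, v) \<in> A\<^sup>+"
  shows "k_colored_kernel V A c k K"
  unfolding k_colored_kernel_def
proof (intro conjI ballI impI)
  show "K \<noteq> {}" "K \<subseteq> V" using assms(1) by (simp_all add: path_kernel_def)
next
  fix u assume "u \<in> V - K"
  then obtain v where "v \<in> K" "(u, v) \<in> A\<^sup>+" using assms(1) unfolding path_kernel_def by blast
  moreover have "u \<noteq> v" using \<open>u \<in> V - K\<close> \<open>v \<in> K\<close> by blast
  ultimately show "\<exists>v\<in>K. colored_reach A c k u v" using assms(2) by blast
next
  fix u v assume "u \<in> K" "v \<in> K" "u \<noteq> v"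
  then show "\<not> colored_reach A c k u v" using assms by (simp add: path_kernel_def)
qed

theorem mainTheorem8:
  fixes V :: "'a set" and A :: "('a \<times> 'a) set" and c :: "'a \<times> 'a \<Rightarrow> nat"
    and m r :: nat and P :: "'a set set"
  assumes "r \<ge> 3"
    and "digraph V A"
    and "m_colored A m c"
    and "semicomplete_multipartite V A r P"
    and "C3_monochromatic A c"
    and "C4_monochromatic A c"
  shows "\<exists>K. k_colored_kernel V A c 2 K"
proof -
  have V: "finite V" "A \<subseteq> V \<times> V" using assms(2) unfolding digraph_def by simp_all
  have "card P = r" "\<forall>X\<in>P. X \<noteq> {}" "\<Union>P = V"
    using assms(4) unfolding semicomplete_multipartite_def by simp_all
  then have "V \<noteq> {}" using assms(1) by fastforce
  then obtain K where K: "path_kernel V (A\<^sup>+) K"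
    using trans_path_kernel_exists[OF V(1) _ trans_trancl] by blast
  have reach_iff: "colored_reach A c 2 u v \<longleftrightarrow> (u, v) \<in> A\<^sup>+" if "u \<noteq> v" for u v
    using colored_reach_of_trancl[OF assms(4) V(2) assms(5,6) _ that]
      trancl_of_colored_reach[of A c 2 u v] by blast
  show ?thesis using k_colored_kernel_of_path_kernel[OF K reach_iff] by blast
qed

end
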